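(* Let $R$ be a commutative noetherian ring and $\mathfrak{a}$ an ideal contained in the Jacobson radical of $R$. Then $R$ is $\mathfrak{a}$-adically complete if and only if the $\mathfrak{a}$-adic completion $\widehat{R}^{\mathfrak{a}}$ is a finitely generated $R$-module.
   Context: A module $M$ is $\mathfrak{a}$-adically complete if the natural map $M\to \widehat{M}^{\mathfrak{a}}=\varprojlim_n M/\mathfrak{a}^nM$ is an isomorphism. *)

theory Defs
  imports "HOL-Algebra.Ring_Divisibility" "HOL-Algebra.Ideal_Product"
begin

primrec ideal_power :: "('a, 'b) ring_scheme \<Rightarrow> 'a set \<Rightarrow> nat \<Rightarrow> 'a set" where
  "ideal_power R I 0 = carrier R"
| "ideal_power R I (Suc n) = ideal_prod R I (ideal_power R I n)"

definition jacobson_radical :: "('a, 'b) ring_scheme \<Rightarrow> 'a set" where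
  "jacobson_radical R = carrier R \<inter> \<Inter> {M. maximalideal M R}"

text \<open>The I-adic completion as the inverse limit of R/I^n: compatible sequences
  of cosets x n of I^n, with x (n+1) mapping to x n (i.e. contained in it).\<close>
definition adic_completion :: "('a, 'b) ring_scheme \<Rightarrow> 'a set \<Rightarrow> (nat \<Rightarrow> 'a set) set" where
  "adic_completion R I =
     {x. (\<forall>n. x n \<in> a_rcosets\<^bsub>R\<^esub> (ideal_power R I n)) \<and> (\<forall>n. x (Suc n) \<subseteq> x n)}"

definition completion_map :: "('a, 'b) ring_scheme \<Rightarrow> 'a set \<Rightarrow> 'a \<Rightarrow> (nat \<Rightarrow> 'a set)" where
  "completion_map R I r = (\<lambda>n. ideal_power R I n +>\<^bsub>R\<^esub> r)"

definition adically_complete :: "('a, 'b) ring_scheme \<Rightarrow> 'a set \<Rightarrow> bool" where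
  "adically_complete R I \<longleftrightarrow> bij_betw (completion_map R I) (carrier R) (adic_completion R I)"

definition coset_rep :: "'a set \<Rightarrow> 'a" where
  "coset_rep C = (SOME c. c \<in> C)"

text \<open>The completion is a finitely generated R-module (R acting componentwise):
  there is a finite set of generators E in the completion such that every element x
  is an R-linear combination sum_(e in E) f(e) * e, computed componentwise in R/I^n.\<close>
definition completion_fin_gen :: "('a, 'b) ring_scheme \<Rightarrow> 'a set \<Rightarrow> bool" where
  "completion_fin_gen R I \<longleftrightarrow>
     (\<exists>E. finite E \<and> E \<subseteq> adic_completion R I \<and>
        (\<forall>x \<in> adic_completion R I. \<exists>f. f \<in> E \<rightarrow> carrier R \<and>
           (\<forall>n. x n = ideal_power R I n +>\<^bsub>R\<^esub>
                  (finsum R (\<lambda>e. f e \<otimes>\<^bsub>R\<^esub> coset_rep (e n)) E))))"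

end

theory Submission
  imports Defs
begin

text \<open>
  If the completion map \<open>R \<rightarrow> R^\<close> is bijective, \<open>R^\<close> is generated by the image of \<open>1\<close>.
  Conversely, assume \<open>R^\<close> is a finitely generated \<open>R\<close>-module.

  Injectivity is Krull's intersection theorem. For \<open>K = \<Inter>n. I^n\<close>, an ideal \<open>L\<close> maximal among
  those with \<open>L \<inter> K = K I\<close> contains a power of every generator of \<open>I\<close> (a chain of colon ideals
  stabilises), hence a power of \<open>I\<close>, hence \<open>K\<close>; so \<open>K = K I\<close>, and Nakayama's lemma gives
  \<open>K = 0\<close> because \<open>1 - g\<close> is a unit for every \<open>g \<in> I\<close>.

  Surjectivity: elements of \<open>R^\<close> are represented by \<open>I\<close>-adic Cauchy sequences. A Cauchy sequence
  whose first term lies in \<open>I\<close> telescopes into \<open>\<Sum>t. t Y\<^sub>t\<close> over the generators \<open>t\<close> of \<open>I\<close>,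
  with Cauchy sequences \<open>Y\<^sub>t\<close>; hence \<open>R^ = R + I R^\<close>. Nakayama's argument for \<open>R^/R\<close> then
  removes the finitely many generators one at a time: modulo the image of \<open>R\<close> a generator
  \<open>c\<close> satisfies \<open>c = g c + (the other generators)\<close> with \<open>g \<in> I\<close>, and \<open>1 - g\<close> is invertible.
\<close>

section \<open>Congruence modulo an ideal\<close>

lemmas ideal_zero_closed = additive_subgroup.zero_closed[OF ideal.axioms(1)]
lemmas ideal_add_closed = additive_subgroup.a_closed[OF ideal.axioms(1)]
lemmas ideal_inv_closed = additive_subgroup.a_inv_closed[OF ideal.axioms(1)]
lemmas ideal_subset_carrier = additive_subgroup.a_subset[OF ideal.axioms(1)]

context ring
begin

definition cong_mod :: "'a set \<Rightarrow> 'a \<Rightarrow> 'a \<Rightarrow> bool" where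
  "cong_mod J a b \<longleftrightarrow> a \<in> carrier R \<and> b \<in> carrier R \<and> a \<ominus> b \<in> J"

lemma cong_mod_carrier: "cong_mod J a b \<Longrightarrow> a \<in> carrier R \<and> b \<in> carrier R"
  unfolding cong_mod_def by simp

lemma cong_mod_refl: "ideal J R \<Longrightarrow> a \<in> carrier R \<Longrightarrow> cong_mod J a a"
  unfolding cong_mod_def by (simp add: r_neg minus_eq ideal_zero_closed)

lemma cong_mod_sym:
  assumes "ideal J R" "cong_mod J a b"
  shows "cong_mod J b a"
proof -
  have "b \<ominus> a = \<ominus> (a \<ominus> b)"
    using assms(2) unfolding cong_mod_def by algebra
  then show ?thesis
    using assms unfolding cong_mod_def by (simp add: ideal_inv_closed)
qed

lemma cong_mod_trans:
  assumes "ideal J R" "cong_mod J a b" "cong_mod J b c"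
  shows "cong_mod J a c"
proof -
  have "a \<ominus> c = (a \<ominus> b) \<oplus> (b \<ominus> c)"
    using assms(2,3) unfolding cong_mod_def by algebra
  then show ?thesis
    using assms unfolding cong_mod_def by (simp add: ideal_add_closed)
qed

lemma cong_mod_add:
  assumes "ideal J R" "cong_mod J a b" "cong_mod J c d"
  shows "cong_mod J (a \<oplus> c) (b \<oplus> d)"
proof -
  have "(a \<oplus> c) \<ominus> (b \<oplus> d) = (a \<ominus> b) \<oplus> (c \<ominus> d)"
    using assms(2,3) unfolding cong_mod_def by algebra
  then show ?thesis
    using assms unfolding cong_mod_def by (simp add: ideal_add_closed)
qed

lemma cong_mod_mult:
  assumes "ideal J R" "cong_mod J a b" "cong_mod J c d"
  shows "cong_mod J (a \<otimes> c) (b \<otimes> d)"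
proof -
  have "(a \<otimes> c) \<ominus> (b \<otimes> d) = (a \<ominus> b) \<otimes> c \<oplus> b \<otimes> (c \<ominus> d)"
    using assms(2,3) unfolding cong_mod_def by algebra
  then show ?thesis
    using assms unfolding cong_mod_def
    by (simp add: ideal_add_closed ideal.I_l_closed ideal.I_r_closed)
qed

lemma cong_mod_iff_rcos_eq:
  "ideal J R \<Longrightarrow> a \<in> carrier R \<Longrightarrow> b \<in> carrier R \<Longrightarrow> cong_mod J a b \<longleftrightarrow> J +> a = J +> b"
  unfolding cong_mod_def using quotient_eq_iff_same_a_r_cos by simp

lemma cong_mod_if_in_rcos:
  assumes J: "ideal J R" and b: "b \<in> carrier R" and a: "a \<in> J +> b"
  shows "cong_mod J a b"
proof -
  interpret J: ideal J R by fact
  have "a \<in> carrier R"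
    using a a_r_coset_subset_G[OF J.a_subset b] by blast
  then show ?thesis
    using cong_mod_iff_rcos_eq[OF J] J.a_repr_independence'[OF a b] b by simp
qed

lemma cong_mod_zeroideal_iff: "cong_mod {\<zero>} a b \<longleftrightarrow> a \<in> carrier R \<and> b \<in> carrier R \<and> a = b"
  unfolding cong_mod_def using r_right_minus_eq by blast

lemma cong_mod_unit_solve:
  assumes J: "ideal J R" and u: "\<one> \<ominus> g \<in> Units R" and g: "g \<in> carrier R" and b: "b \<in> carrier R"
    and a: "cong_mod J a (g \<otimes> a \<oplus> b)"
  shows "cong_mod J a (inv (\<one> \<ominus> g) \<otimes> b)"
proof -
  have ac: "a \<in> carrier R" using cong_mod_carrier[OF a] by simp
  have "cong_mod J (a \<oplus> \<ominus> (g \<otimes> a)) ((g \<otimes> a \<oplus> b) \<oplus> \<ominus> (g \<otimes> a))"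
    using cong_mod_add[OF J a cong_mod_refl[OF J]] ac g by simp
  moreover have "a \<oplus> \<ominus> (g \<otimes> a) = (\<one> \<ominus> g) \<otimes> a" "(g \<otimes> a \<oplus> b) \<oplus> \<ominus> (g \<otimes> a) = b"
    using ac g b by algebra+
  ultimately have "cong_mod J (inv (\<one> \<ominus> g) \<otimes> ((\<one> \<ominus> g) \<otimes> a)) (inv (\<one> \<ominus> g) \<otimes> b)"
    using cong_mod_mult[OF J cong_mod_refl[OF J]] u by simp
  then show ?thesis
    using u ac g by (simp add: m_assoc[symmetric])
qed

lemma coset_rep_rcos:
  assumes "ideal J R" "C \<in> a_rcosets J"
  shows "coset_rep C \<in> C \<and> coset_rep C \<in> carrier R \<and> C = J +> coset_rep C"
proof -
  interpret J: ideal J R by fact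
  obtain a where a: "a \<in> carrier R" "C = J +> a"
    using assms(2) unfolding A_RCOSETS_def' by blast
  then have "coset_rep C \<in> J +> a"
    unfolding coset_rep_def using J.a_rcos_self by (metis someI)
  then show ?thesis
    using a J.a_repr_independence' a_r_coset_subset_G[OF J.a_subset] by blast
qed

end

section \<open>Linear combinations and Nakayama's lemma\<close>

context cring
begin

definition lincomb :: "'c set \<Rightarrow> ('c \<Rightarrow> 'a) \<Rightarrow> ('c \<Rightarrow> 'a) \<Rightarrow> 'a" where
  "lincomb G f v = (\<Oplus>e\<in>G. f e \<otimes> v e)"

lemma lincomb_closed: "f \<in> G \<rightarrow> carrier R \<Longrightarrow> v \<in> G \<rightarrow> carrier R \<Longrightarrow> lincomb G f v \<in> carrier R"
  unfolding lincomb_def by (intro finsum_closed) auto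

lemma lincomb_empty [simp]: "lincomb {} f v = \<zero>"
  unfolding lincomb_def by simp

lemma lincomb_insert:
  "finite G \<Longrightarrow> d \<notin> G \<Longrightarrow> f \<in> insert d G \<rightarrow> carrier R \<Longrightarrow> v \<in> insert d G \<rightarrow> carrier R \<Longrightarrow>
   lincomb (insert d G) f v = f d \<otimes> v d \<oplus> lincomb G f v"
  unfolding lincomb_def by (intro finsum_insert) auto

lemma lincomb_cong:
  "(\<And>e. e \<in> G \<Longrightarrow> f e = f' e) \<Longrightarrow> (\<And>e. e \<in> G \<Longrightarrow> v e = v' e) \<Longrightarrow>
   f' \<in> G \<rightarrow> carrier R \<Longrightarrow> v' \<in> G \<rightarrow> carrier R \<Longrightarrow> lincomb G f v = lincomb G f' v'"
  unfolding lincomb_def by (rule finsum_cong') auto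

lemma lincomb_zero: "v \<in> G \<rightarrow> carrier R \<Longrightarrow> lincomb G (\<lambda>e. \<zero>) v = \<zero>"
  unfolding lincomb_def by (subst finsum_cong'[of _ _ "\<lambda>e. \<zero>"]) (auto simp: Pi_iff)

lemma lincomb_add:
  assumes "f \<in> G \<rightarrow> carrier R" "g \<in> G \<rightarrow> carrier R" "v \<in> G \<rightarrow> carrier R"
  shows "lincomb G f v \<oplus> lincomb G g v = lincomb G (\<lambda>e. f e \<oplus> g e) v"
proof -
  have "lincomb G f v \<oplus> lincomb G g v = (\<Oplus>e\<in>G. f e \<otimes> v e \<oplus> g e \<otimes> v e)"
    unfolding lincomb_def using assms by (intro finsum_addf[symmetric]) auto
  also have "\<dots> = lincomb G (\<lambda>e. f e \<oplus> g e) v"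
    unfolding lincomb_def using assms by (intro finsum_cong') (auto simp: l_distr Pi_iff)
  finally show ?thesis .
qed

lemma lincomb_smult:
  assumes "finite G" "a \<in> carrier R" "f \<in> G \<rightarrow> carrier R" "v \<in> G \<rightarrow> carrier R"
  shows "a \<otimes> lincomb G f v = lincomb G (\<lambda>e. a \<otimes> f e) v"
proof -
  have "a \<otimes> lincomb G f v = (\<Oplus>e\<in>G. a \<otimes> (f e \<otimes> v e))"
    unfolding lincomb_def using assms by (intro finsum_rdistr) auto
  also have "\<dots> = lincomb G (\<lambda>e. a \<otimes> f e) v"
    unfolding lincomb_def using assms by (intro finsum_cong') (auto simp: m_assoc Pi_iff)
  finally show ?thesis .
qed

lemma lincomb_partial_sums:
  fixes B :: "nat \<Rightarrow> 'c \<Rightarrow> 'a"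
  assumes B: "\<And>k. B k \<in> G \<rightarrow> carrier R" and v: "v \<in> G \<rightarrow> carrier R"
  shows "lincomb G (\<lambda>e. \<Oplus>k\<in>{..n}. B k e) v = (\<Oplus>k\<in>{..n}. lincomb G (B k) v)"
proof (induct n)
  case 0
  have "(\<Oplus>k\<in>{..0}. B k e) = B 0 e" if "e \<in> G" for e
    by (rule finsum_0) (use B that in blast)
  then have "lincomb G (\<lambda>e. \<Oplus>k\<in>{..0}. B k e) v = lincomb G (B 0) v"
    by (rule lincomb_cong) (use B v in auto)
  then show ?case
    using lincomb_closed[OF B v] by (simp add: finsum_0)
next
  case (Suc n)
  have sR: "(\<lambda>e. \<Oplus>k\<in>{..n}. B k e) \<in> G \<rightarrow> carrier R"
    using B by (auto intro!: finsum_closed)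
  have "(\<Oplus>k\<in>{..Suc n}. B k e) = B (Suc n) e \<oplus> (\<Oplus>k\<in>{..n}. B k e)" if "e \<in> G" for e
    by (rule finsum_Suc) (use B that in blast)
  moreover have "(\<lambda>e. B (Suc n) e \<oplus> (\<Oplus>k\<in>{..n}. B k e)) \<in> G \<rightarrow> carrier R"
    using B[of "Suc n"] sR by (auto simp: Pi_iff)
  ultimately have "lincomb G (\<lambda>e. \<Oplus>k\<in>{..Suc n}. B k e) v = lincomb G (\<lambda>e. B (Suc n) e \<oplus> (\<Oplus>k\<in>{..n}. B k e)) v"
    using v by (intro lincomb_cong) auto
  also have "\<dots> = lincomb G (B (Suc n)) v \<oplus> lincomb G (\<lambda>e. \<Oplus>k\<in>{..n}. B k e) v"
    by (rule lincomb_add[OF B sR v, symmetric])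
  also have "\<dots> = (\<Oplus>k\<in>{..Suc n}. lincomb G (B k) v)"
    using Suc lincomb_closed[OF B v] by (simp add: finsum_Suc)
  finally show ?case .
qed

definition lincombs :: "'a set \<Rightarrow> 'a set \<Rightarrow> 'a set" where
  "lincombs T J = {lincomb T g (\<lambda>t. t) | g. g \<in> T \<rightarrow> J}"

lemma lincombs_smult:
  assumes T: "finite T" "T \<subseteq> carrier R" and J: "ideal J R"
    and a: "a \<in> lincombs T J" and x: "x \<in> carrier R"
  shows "x \<otimes> a \<in> lincombs T J"
proof -
  obtain g where g: "g \<in> T \<rightarrow> J" "a = lincomb T g (\<lambda>t. t)"
    using a unfolding lincombs_def by blast
  have "g \<in> T \<rightarrow> carrier R" "(\<lambda>t. t) \<in> T \<rightarrow> carrier R"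
    using g(1) ideal_subset_carrier[OF J] T(2) by blast+
  then have "x \<otimes> a = lincomb T (\<lambda>t. x \<otimes> g t) (\<lambda>t. t)"
    using lincomb_smult[OF T(1) x] g(2) by simp
  moreover have "(\<lambda>t. x \<otimes> g t) \<in> T \<rightarrow> J"
    using g(1) x ideal.I_l_closed[OF J] by (simp add: Pi_iff)
  ultimately show ?thesis
    unfolding lincombs_def by blast
qed

lemma lincombs_add:
  assumes T: "T \<subseteq> carrier R" and J: "ideal J R"
    and a: "a \<in> lincombs T J" and b: "b \<in> lincombs T J"
  shows "a \<oplus> b \<in> lincombs T J"
proof -
  obtain g h where g: "g \<in> T \<rightarrow> J" "a = lincomb T g (\<lambda>t. t)"
    and h: "h \<in> T \<rightarrow> J" "b = lincomb T h (\<lambda>t. t)"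
    using a b unfolding lincombs_def by blast
  have "g \<in> T \<rightarrow> carrier R" "h \<in> T \<rightarrow> carrier R" "(\<lambda>t. t) \<in> T \<rightarrow> carrier R"
    using g(1) h(1) ideal_subset_carrier[OF J] T by blast+
  then have "a \<oplus> b = lincomb T (\<lambda>t. g t \<oplus> h t) (\<lambda>t. t)"
    using lincomb_add g(2) h(2) by simp
  moreover have "(\<lambda>t. g t \<oplus> h t) \<in> T \<rightarrow> J"
    using g(1) h(1) ideal_add_closed[OF J] by (simp add: Pi_iff)
  ultimately show ?thesis
    unfolding lincombs_def by blast
qed

lemma lincombs_ideal:
  assumes T: "finite T" "T \<subseteq> carrier R" and J: "ideal J R"
  shows "ideal (lincombs T J) R"
proof -
  have carrier: "lincombs T J \<subseteq> carrier R"
  proof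
    fix a assume "a \<in> lincombs T J"
    then obtain g where g: "g \<in> T \<rightarrow> J" "a = lincomb T g (\<lambda>t. t)"
      unfolding lincombs_def by blast
    have "g \<in> T \<rightarrow> carrier R" "(\<lambda>t. t) \<in> T \<rightarrow> carrier R"
      using g(1) ideal_subset_carrier[OF J] T(2) by blast+
    then show "a \<in> carrier R"
      using lincomb_closed g(2) by simp
  qed
  have "(\<lambda>t. \<zero>) \<in> T \<rightarrow> J"
    using ideal_zero_closed[OF J] by blast
  then have zero: "\<zero> \<in> lincombs T J"
    using lincomb_zero[of "\<lambda>t. t" T] T(2) unfolding lincombs_def by force
  have neg: "\<ominus> a \<in> lincombs T J" if a: "a \<in> lincombs T J" for a
  proof -
    have "\<ominus> a = \<ominus> \<one> \<otimes> a"
      using a carrier by (simp add: l_minus subset_iff)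
    then show ?thesis
      using lincombs_smult[OF T J a] by simp
  qed
  have rmult: "a \<otimes> x \<in> lincombs T J" if a: "a \<in> lincombs T J" and x: "x \<in> carrier R" for a x
  proof -
    have "a \<otimes> x = x \<otimes> a"
      using a x carrier by (simp add: m_comm subset_iff)
    then show ?thesis
      using lincombs_smult[OF T J a x] by simp
  qed
  show ?thesis
    by (intro idealI ring_axioms add.subgroupI carrier neg lincombs_add[OF T(2) J]
        lincombs_smult[OF T J] rmult) (use zero in blast)+
qed

lemma genideal_subset_lincombs:
  assumes T: "finite T" "T \<subseteq> carrier R"
  shows "Idl T \<subseteq> lincombs T (carrier R)"
proof (rule genideal_minimal[OF lincombs_ideal[OF T oneideal]], rule subsetI)
  fix s assume s: "s \<in> T"
  let ?g = "\<lambda>t. if s = t then \<one> else \<zero>"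
  have "lincomb T ?g (\<lambda>t. t) = (\<Oplus>t\<in>T. if s = t then t else \<zero>)"
    unfolding lincomb_def using T(2) by (intro finsum_cong') auto
  also have "\<dots> = s"
    using s T by (intro finsum_singleton) auto
  finally have "s = lincomb T ?g (\<lambda>t. t)" ..
  moreover have "?g \<in> T \<rightarrow> carrier R"
    by simp
  ultimately show "s \<in> lincombs T (carrier R)"
    unfolding lincombs_def by blast
qed

lemma genideal_prod_subset_lincombs:
  assumes T: "finite T" "T \<subseteq> carrier R" and J: "ideal J R"
  shows "(Idl T) \<cdot> J \<subseteq> lincombs T J"
proof
  fix x assume "x \<in> (Idl T) \<cdot> J"
  then show "x \<in> lincombs T J"
  proof (induct x rule: ideal_prod.induct)
    case (prod i j)
    obtain g where g: "g \<in> T \<rightarrow> carrier R" "i = lincomb T g (\<lambda>t. t)"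
      using prod(1) genideal_subset_lincombs[OF T] unfolding lincombs_def by blast
    have j: "j \<in> carrier R" using ideal.Icarr[OF J prod(2)] .
    have idT: "(\<lambda>t. t) \<in> T \<rightarrow> carrier R"
      using T(2) by auto
    have "i \<otimes> j = j \<otimes> i"
      using g j lincomb_closed[OF g(1) idT] by (simp add: m_comm)
    also have "\<dots> = lincomb T (\<lambda>t. j \<otimes> g t) (\<lambda>t. t)"
      using g(2) lincomb_smult[OF T(1) j g(1) idT] by simp
    finally have "i \<otimes> j = lincomb T (\<lambda>t. j \<otimes> g t) (\<lambda>t. t)" .
    moreover have "(\<lambda>t. j \<otimes> g t) \<in> T \<rightarrow> J"
      using g(1) ideal.I_r_closed[OF J prod(2)] by (simp add: Pi_iff)
    ultimately show ?case unfolding lincombs_def by blast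
  next
    case (sum s1 s2)
    then show ?case using ideal_add_closed[OF lincombs_ideal[OF T J]] by blast
  qed
qed

lemma lincombs_insert_subset:
  assumes S: "finite S" "insert d S \<subseteq> carrier R" and J: "ideal J R" and d: "d \<in> lincombs S J"
  shows "lincombs (insert d S) J \<subseteq> lincombs S J"
proof (cases "d \<in> S")
  case True
  then show ?thesis by (simp add: insert_absorb)
next
  case False
  have SR: "S \<subseteq> carrier R"
    using S(2) by blast
  show ?thesis
  proof
    fix x assume "x \<in> lincombs (insert d S) J"
    then obtain h where h: "h \<in> insert d S \<rightarrow> J" "x = lincomb (insert d S) h (\<lambda>t. t)"
      unfolding lincombs_def by blast
    have hR: "h \<in> insert d S \<rightarrow> carrier R" and hS: "h \<in> S \<rightarrow> J"
      using h(1) ideal.Icarr[OF J] by blast+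
    have "(\<lambda>t. t) \<in> insert d S \<rightarrow> carrier R"
      using S(2) by blast
    then have "x = h d \<otimes> d \<oplus> lincomb S h (\<lambda>t. t)"
      using h(2) lincomb_insert[OF S(1) False hR] by simp
    moreover have "h d \<otimes> d \<in> lincombs S J"
      using ideal.I_l_closed[OF lincombs_ideal[OF S(1) SR J] d] hR by blast
    moreover have "lincomb S h (\<lambda>t. t) \<in> lincombs S J"
      unfolding lincombs_def using hS by blast
    ultimately show "x \<in> lincombs S J"
      using ideal_add_closed[OF lincombs_ideal[OF S(1) SR J]] by simp
  qed
qed

lemma nakayama_lincombs:
  assumes J: "ideal J R" and units: "\<And>g. g \<in> J \<Longrightarrow> \<one> \<ominus> g \<in> Units R"
  shows "finite S \<Longrightarrow> S \<subseteq> K \<Longrightarrow> K \<subseteq> carrier R \<Longrightarrow> K \<subseteq> lincombs S J \<Longrightarrow> K \<subseteq> {\<zero>}"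
proof (induct S rule: finite_induct)
  case empty
  then show ?case unfolding lincombs_def by simp
next
  case (insert d S)
  have S: "insert d S \<subseteq> carrier R" using insert(4,5) by blast
  obtain g where g: "g \<in> insert d S \<rightarrow> J" "d = lincomb (insert d S) g (\<lambda>t. t)"
    using insert(4,6) unfolding lincombs_def by blast
  have gR: "g \<in> insert d S \<rightarrow> carrier R" using g(1) ideal.Icarr[OF J] by blast
  have "d = g d \<otimes> d \<oplus> lincomb S g (\<lambda>t. t)"
    using g(2) lincomb_insert[OF insert(1,2) gR, of "\<lambda>t. t"] S by auto
  then have "cong_mod {\<zero>} d (g d \<otimes> d \<oplus> lincomb S g (\<lambda>t. t))"
    using cong_mod_refl[OF zeroideal, of d] S by (metis insert_subset)
  then have d_eq: "d = inv (\<one> \<ominus> g d) \<otimes> lincomb S g (\<lambda>t. t)"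
    using cong_mod_unit_solve[OF zeroideal units] g(1) gR S lincomb_closed[of g S "\<lambda>t. t"]
    unfolding cong_mod_zeroideal_iff by auto
  have SR: "S \<subseteq> carrier R"
    using S by blast
  have "lincomb S g (\<lambda>t. t) \<in> lincombs S J"
    unfolding lincombs_def using g(1) by auto
  then have "inv (\<one> \<ominus> g d) \<otimes> lincomb S g (\<lambda>t. t) \<in> lincombs S J"
    using ideal.I_l_closed[OF lincombs_ideal[OF insert(1) SR J]] units g(1) by blast
  then have "d \<in> lincombs S J"
    by (subst d_eq)
  then have "K \<subseteq> lincombs S J"
    using subset_trans[OF insert(6) lincombs_insert_subset[OF insert(1) S J]] by simp
  then show ?case
    using insert(3-5) by simp
qed

end

section \<open>Powers of ideals\<close>

context ring
begin

lemma ideal_power_ideal: "ideal A R \<Longrightarrow> ideal (ideal_power R A n) R"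
  by (induct n) (simp_all add: oneideal ideal_prod_is_ideal)

lemma ideal_power_Suc_subset: "ideal A R \<Longrightarrow> ideal_power R A (Suc n) \<subseteq> ideal_power R A n"
  using ideal_prod_inter[OF _ ideal_power_ideal] by simp

lemma ideal_prod_mono:
  assumes "B \<subseteq> C"
  shows "A \<cdot> B \<subseteq> A \<cdot> C"
proof
  fix x assume "x \<in> A \<cdot> B"
  then show "x \<in> A \<cdot> C"
    by (induct x rule: ideal_prod.induct) (use assms in \<open>auto intro: ideal_prod.intros\<close>)
qed

lemma genideal_ideal_eq: "ideal I R \<Longrightarrow> Idl I = I"
  using genideal_minimal[of I I] genideal_self[OF ideal_subset_carrier] by (simp add: subset_antisym)

lemma set_add_mem: "h \<in> H \<Longrightarrow> k \<in> K \<Longrightarrow> h \<oplus> k \<in> H <+>\<^bsub>R\<^esub> K"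
  unfolding set_add_def' by blast

lemma set_add_subset_ideal:
  assumes "ideal L R" "H \<subseteq> L" "K \<subseteq> L"
  shows "H <+>\<^bsub>R\<^esub> K \<subseteq> L"
proof
  fix x assume "x \<in> H <+>\<^bsub>R\<^esub> K"
  then obtain h k where "h \<in> H" "k \<in> K" "x = h \<oplus> k"
    unfolding set_add_def' by blast
  then show "x \<in> L"
    using ideal_add_closed[OF assms(1)] assms(2,3) by auto
qed

lemma subset_set_add_left:
  assumes "ideal K R" "H \<subseteq> carrier R"
  shows "H \<subseteq> H <+>\<^bsub>R\<^esub> K"
proof
  fix x assume x: "x \<in> H"
  then show "x \<in> H <+>\<^bsub>R\<^esub> K"
    using set_add_mem[OF x ideal_zero_closed[OF assms(1)]] assms(2) by auto
qed

lemma subset_set_add_right: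
  assumes "ideal H R" "K \<subseteq> carrier R"
  shows "K \<subseteq> H <+>\<^bsub>R\<^esub> K"
proof
  fix x assume x: "x \<in> K"
  then show "x \<in> H <+>\<^bsub>R\<^esub> K"
    using set_add_mem[OF ideal_zero_closed[OF assms(1)] x] assms(2) by auto
qed

end

context cring
begin

lemma ideal_prod_set_add_subset:
  assumes A: "ideal A R" and P: "ideal P R" and Q: "ideal Q R"
  shows "A \<cdot> (P <+>\<^bsub>R\<^esub> Q) \<subseteq> A \<cdot> P <+>\<^bsub>R\<^esub> Q"
    and "A \<cdot> (P <+>\<^bsub>R\<^esub> Q) \<subseteq> P <+>\<^bsub>R\<^esub> A \<cdot> Q"
proof -
  have AP: "ideal (A \<cdot> P) R" and AQ: "ideal (A \<cdot> Q) R"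
    using ideal_prod_is_ideal A P Q by blast+
  show "A \<cdot> (P <+>\<^bsub>R\<^esub> Q) \<subseteq> A \<cdot> P <+>\<^bsub>R\<^esub> Q"
    unfolding ideal_prod_distr(1)[OF A P Q]
    using set_add_subset_ideal[OF add_ideals[OF AP Q]] ideal_prod_inter[OF A Q]
      subset_set_add_left[OF Q ideal_subset_carrier[OF AP]]
      subset_set_add_right[OF AP ideal_subset_carrier[OF Q]] by blast
  show "A \<cdot> (P <+>\<^bsub>R\<^esub> Q) \<subseteq> P <+>\<^bsub>R\<^esub> A \<cdot> Q"
    unfolding ideal_prod_distr(1)[OF A P Q]
    using set_add_subset_ideal[OF add_ideals[OF P AQ]] ideal_prod_inter[OF A P]
      subset_set_add_left[OF AQ ideal_subset_carrier[OF P]]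
      subset_set_add_right[OF P ideal_subset_carrier[OF AQ]] by blast
qed

lemma ideal_power_set_add_subset:
  assumes A: "ideal A R" and B: "ideal B R"
  shows "ideal_power R (A <+>\<^bsub>R\<^esub> B) (p + q) \<subseteq> ideal_power R A p <+>\<^bsub>R\<^esub> ideal_power R B q"
proof (induct "p + q" arbitrary: p q)
  case 0
  then show ?case
    using subset_set_add_left[OF oneideal] by simp
next
  case (Suc n)
  let ?X = "ideal_power R A p <+>\<^bsub>R\<^esub> ideal_power R B q"
  let ?P = "ideal_power R (A <+>\<^bsub>R\<^esub> B) n"
  have Ap: "ideal (ideal_power R A p) R" and Bq: "ideal (ideal_power R B q) R"
    and AB: "ideal (A <+>\<^bsub>R\<^esub> B) R"
    using ideal_power_ideal add_ideals A B by blast+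
  have X: "ideal ?X R"
    by (rule add_ideals[OF Ap Bq])
  have ApX: "ideal_power R A p \<subseteq> ?X" and BqX: "ideal_power R B q \<subseteq> ?X"
    using subset_set_add_left[OF Bq ideal_subset_carrier[OF Ap]]
      subset_set_add_right[OF Ap ideal_subset_carrier[OF Bq]] by blast+
  consider "p = 0" | "q = 0" | p' q' where "p = Suc p'" "q = Suc q'"
    by (metis not0_implies_Suc)
  then show ?case
  proof cases
    case 1
    then show ?thesis
      using ApX ideal_subset_carrier[OF ideal_power_ideal[OF AB]] by auto
  next
    case 2
    then show ?thesis
      using BqX ideal_subset_carrier[OF ideal_power_ideal[OF AB]] by auto
  next
    case 3
    have "A \<cdot> ?P \<subseteq> A \<cdot> (ideal_power R A p' <+>\<^bsub>R\<^esub> ideal_power R B q)"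
      using Suc(1)[of p' q] Suc(2) 3 by (intro ideal_prod_mono) simp
    also have "\<dots> \<subseteq> ?X"
      using ideal_prod_set_add_subset(1)[OF A ideal_power_ideal[OF A] Bq] 3 by simp
    finally have AP: "A \<cdot> ?P \<subseteq> ?X" .
    have "B \<cdot> ?P \<subseteq> B \<cdot> (ideal_power R A p <+>\<^bsub>R\<^esub> ideal_power R B q')"
      using Suc(1)[of p q'] Suc(2) 3 by (intro ideal_prod_mono) simp
    also have "\<dots> \<subseteq> ?X"
      using ideal_prod_set_add_subset(2)[OF B Ap ideal_power_ideal[OF B]] 3 by simp
    finally have BP: "B \<cdot> ?P \<subseteq> ?X" .
    have "ideal_power R (A <+>\<^bsub>R\<^esub> B) (p + q) = A \<cdot> ?P <+>\<^bsub>R\<^esub> B \<cdot> ?P"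
      using ideal_prod_distr(2)[OF ideal_power_ideal[OF AB] A B] Suc(2)[symmetric] by simp
    then show ?thesis
      using set_add_subset_ideal[OF X AP BP] by simp
  qed
qed

lemma ideal_power_cgenideal: "t \<in> carrier R \<Longrightarrow> ideal_power R (PIdl t) k = PIdl (t [^] k)"
proof (induct k)
  case 0
  then show ?case
    by (simp add: cgenideal_eq_genideal genideal_one)
next
  case (Suc k)
  then have "ideal_power R (PIdl t) (Suc k) = Idl (PIdl t <#> PIdl (t [^] k))"
    by (simp add: ideal_prod_eq_genideal cgenideal_ideal)
  also have "\<dots> = PIdl (t [^] Suc k)"
    using Suc(2) by (simp add: cgenideal_prod genideal_ideal_eq cgenideal_ideal m_comm)
  finally show ?case .
qed

lemma genideal_insert:
  assumes t: "t \<in> carrier R" and T: "T \<subseteq> carrier R"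
  shows "Idl (insert t T) = PIdl t <+>\<^bsub>R\<^esub> Idl T"
proof -
  have tT: "insert t T \<subseteq> carrier R"
    using t T by blast
  have "Idl (insert t T) \<subseteq> Idl (PIdl t \<union> Idl T)"
    using cgenideal_self[OF t] genideal_self[OF T] ideal.Icarr[OF cgenideal_ideal[OF t]]
      ideal.Icarr[OF genideal_ideal[OF T]]
    by (intro subset_Idl_subset) blast+
  moreover have "Idl (PIdl t \<union> Idl T) \<subseteq> Idl (insert t T)"
    using cgenideal_minimal[OF genideal_ideal[OF tT]] genideal_self[OF tT] subset_Idl_subset[OF tT]
    by (intro genideal_minimal[OF genideal_ideal[OF tT]]) blast
  ultimately show ?thesis
    using union_genideal[OF cgenideal_ideal[OF t] genideal_ideal[OF T]] by blast
qed

lemma ideal_power_genideal_subset: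
  assumes L: "ideal L R"
  shows "finite T \<Longrightarrow> T \<subseteq> carrier R \<Longrightarrow> (\<And>t. t \<in> T \<Longrightarrow> \<exists>k::nat. t [^] k \<in> L) \<Longrightarrow>
    \<exists>m. ideal_power R (Idl T) m \<subseteq> L"
proof (induct T rule: finite_induct)
  case empty
  have "ideal_power R (Idl {}) 1 = Idl {}"
    using ideal_prod_one[OF genideal_ideal[of "{}"]] by simp
  then show ?case
    using genideal_minimal[OF L] by (metis empty_subsetI)
next
  case (insert t T)
  have t: "t \<in> carrier R" and T: "T \<subseteq> carrier R"
    using insert(4) by auto
  obtain m where m: "ideal_power R (Idl T) m \<subseteq> L"
    using insert by auto
  obtain k :: nat where k: "t [^] k \<in> L"
    using insert(5) by blast
  have "ideal_power R (Idl (insert t T)) (k + m) \<subseteq> ideal_power R (PIdl t) k <+>\<^bsub>R\<^esub> ideal_power R (Idl T) m"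
    using ideal_power_set_add_subset[OF cgenideal_ideal[OF t] genideal_ideal[OF T]]
    by (simp add: genideal_insert[OF t T])
  also have "\<dots> \<subseteq> L"
    using set_add_subset_ideal[OF L _ m] cgenideal_minimal[OF L k] ideal_power_cgenideal[OF t] by simp
  finally show ?case by blast
qed

lemma colon_ideal:
  assumes L: "ideal L R" and c: "c \<in> carrier R"
  shows "ideal {r \<in> carrier R. c \<otimes> r \<in> L} R"
proof (intro idealI ring_axioms add.subgroupI)
  have "\<zero> \<in> {r \<in> carrier R. c \<otimes> r \<in> L}"
    using c ideal_zero_closed[OF L] by simp
  then show "{r \<in> carrier R. c \<otimes> r \<in> L} \<noteq> {}"
    by blast
  show "\<ominus> a \<in> {r \<in> carrier R. c \<otimes> r \<in> L}" if "a \<in> {r \<in> carrier R. c \<otimes> r \<in> L}" for a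
    using that c ideal_inv_closed[OF L] by (simp add: r_minus)
  show "a \<oplus> b \<in> {r \<in> carrier R. c \<otimes> r \<in> L}"
    if "a \<in> {r \<in> carrier R. c \<otimes> r \<in> L}" "b \<in> {r \<in> carrier R. c \<otimes> r \<in> L}" for a b
    using that c ideal_add_closed[OF L] by (simp add: r_distr)
  show "x \<otimes> a \<in> {r \<in> carrier R. c \<otimes> r \<in> L}"
    if "a \<in> {r \<in> carrier R. c \<otimes> r \<in> L}" "x \<in> carrier R" for a x
    using that c ideal.I_l_closed[OF L] m_lcomm[of c x a] by simp
  show "a \<otimes> x \<in> {r \<in> carrier R. c \<otimes> r \<in> L}"
    if "a \<in> {r \<in> carrier R. c \<otimes> r \<in> L}" "x \<in> carrier R" for a x
    using that c ideal.I_r_closed[OF L] by (simp add: m_assoc[symmetric])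
qed auto

end

section \<open>Noetherian rings\<close>

lemma (in noetherian_ring) ideal_family_has_maximal:
  assumes "F \<noteq> {}" "F \<subseteq> {J. ideal J R}"
  shows "\<exists>M\<in>F. \<forall>N\<in>F. M \<subseteq> N \<longrightarrow> N = M"
proof (rule subset_Zorn)
  fix C assume C: "subset.chain F C"
  show "\<exists>U\<in>F. \<forall>X\<in>C. X \<subseteq> U"
  proof (cases "C = {}")
    case True
    then show ?thesis using assms(1) by blast
  next
    case False
    have "subset.chain {J. ideal J R} C"
      using C assms(2) unfolding pred_on.chain_def by blast
    then have "\<Union>C \<in> C"
      using ideal_chain_is_trivial False by blast
    moreover have "C \<subseteq> F"
      using C unfolding pred_on.chain_def by blast
    ultimately show ?thesis by blast
  qed
qed

lemma (in noetherian_ring) ascending_ideal_chain_stabilizes: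
  assumes "\<And>k. ideal (A k) R" "\<And>k. A k \<subseteq> A (Suc k)"
  shows "\<exists>k. A (Suc k) = A k"
proof -
  obtain k where "\<forall>N\<in>range A. A k \<subseteq> N \<longrightarrow> N = A k"
    using ideal_family_has_maximal[of "range A"] assms(1) by blast
  then show ?thesis
    using assms(2) by blast
qed

locale noetherian_cring = cring R + noetherian_ring R for R (structure)
begin

lemma nonunit_in_maximalideal:
  assumes a: "a \<in> carrier R" "a \<notin> Units R"
  shows "\<exists>M. maximalideal M R \<and> a \<in> M"
proof -
  let ?F = "{N. ideal N R \<and> a \<in> N \<and> \<one> \<notin> N}"
  have "\<one> \<notin> PIdl a"
  proof
    assume "\<one> \<in> PIdl a"
    then obtain x where x: "x \<in> carrier R" "\<one> = x \<otimes> a"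
      unfolding cgenideal_def by blast
    then have "a divides \<one>"
      unfolding factor_def using a(1) by (metis m_comm)
    then show False
      using divides_one a by blast
  qed
  then have "PIdl a \<in> ?F"
    using cgenideal_ideal[OF a(1)] cgenideal_self[OF a(1)] by blast
  then obtain M where M: "M \<in> ?F" and max: "\<And>N. N \<in> ?F \<Longrightarrow> M \<subseteq> N \<Longrightarrow> N = M"
    using ideal_family_has_maximal[of ?F] by blast
  have "maximalideal M R"
  proof (rule maximalidealI)
    show "ideal M R" and "carrier R \<noteq> M"
      using M by auto
    show "J = M \<or> J = carrier R" if J: "ideal J R" "M \<subseteq> J" "J \<subseteq> carrier R" for J
    proof (cases "\<one> \<in> J")
      case True
      then show ?thesis using ideal.one_imp_carrier[OF J(1)] by simp
    next
      case False
      then have "J \<in> ?F" using J M by blast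
      then show ?thesis using max J(2) by blast
    qed
  qed
  then show ?thesis
    using M by blast
qed

lemma jacobson_radical_one_minus_Units:
  assumes g: "g \<in> jacobson_radical R"
  shows "\<one> \<ominus> g \<in> Units R"
proof (rule ccontr)
  have gR: "g \<in> carrier R"
    using g unfolding jacobson_radical_def by blast
  assume "\<one> \<ominus> g \<notin> Units R"
  then obtain M where M: "maximalideal M R" "\<one> \<ominus> g \<in> M"
    using nonunit_in_maximalideal gR by blast
  have "g \<in> M"
    using g M(1) unfolding jacobson_radical_def by blast
  then have "(\<one> \<ominus> g) \<oplus> g \<in> M"
    by (rule ideal_add_closed[OF maximalideal.axioms(1)[OF M(1)] M(2)])
  moreover have "(\<one> \<ominus> g) \<oplus> g = \<one>"
    using gR by algebra
  ultimately show False
    using maximalideal.I_notcarr[OF M(1)] ideal.one_imp_carrier[OF maximalideal.axioms(1)[OF M(1)]]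
    by simp
qed

lemma power_colon_stabilizes:
  assumes L: "ideal L R" and t: "t \<in> carrier R"
  shows "\<exists>k::nat. \<forall>r\<in>carrier R. t [^] Suc k \<otimes> r \<in> L \<longrightarrow> t [^] k \<otimes> r \<in> L"
proof -
  define A where "A k = {r \<in> carrier R. t [^] k \<otimes> r \<in> L}" for k :: nat
  have ideal: "ideal (A k) R" for k
    unfolding A_def using colon_ideal[OF L] t by simp
  have pow_Suc: "t [^] Suc k \<otimes> r = t \<otimes> (t [^] k \<otimes> r)" if "r \<in> carrier R" for k r
  proof -
    have "\<And>w. w \<in> carrier R \<Longrightarrow> (w \<otimes> t) \<otimes> r = t \<otimes> (w \<otimes> r)"
      using t that by algebra
    then show ?thesis
      using t by simp
  qed
  have mono: "A k \<subseteq> A (Suc k)" for k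
    unfolding A_def using pow_Suc ideal.I_l_closed[OF L _ t] by auto
  obtain k where "A (Suc k) = A k"
    using ascending_ideal_chain_stabilizes[of A, OF ideal mono] by blast
  then show ?thesis
    unfolding A_def by blast
qed

lemma power_mem_of_maximal:
  assumes L: "ideal L R" and K: "ideal K R" and t: "t \<in> carrier R"
    and tK: "\<And>y. y \<in> K \<Longrightarrow> t \<otimes> y \<in> L"
    and max: "\<And>L'. ideal L' R \<Longrightarrow> L \<subseteq> L' \<Longrightarrow> L' \<inter> K \<subseteq> L \<Longrightarrow> L' = L"
  shows "\<exists>k::nat. t [^] k \<in> L"
proof -
  obtain k :: nat where stable: "\<And>r. r \<in> carrier R \<Longrightarrow> t [^] Suc k \<otimes> r \<in> L \<Longrightarrow> t [^] k \<otimes> r \<in> L"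
    using power_colon_stabilizes[OF L t] by blast
  have tk: "t [^] k \<in> carrier R"
    using t by simp
  define L' where "L' = L <+>\<^bsub>R\<^esub> PIdl (t [^] k)"
  have L': "ideal L' R"
    unfolding L'_def by (rule add_ideals[OF L cgenideal_ideal[OF tk]])
  have LL': "L \<subseteq> L'"
    unfolding L'_def by (rule subset_set_add_left[OF cgenideal_ideal[OF tk] ideal_subset_carrier[OF L]])
  have tkL': "t [^] k \<in> L'"
    using subset_set_add_right[OF L ideal_subset_carrier[OF cgenideal_ideal[OF tk]]] cgenideal_self[OF tk]
    unfolding L'_def by blast
  have "L' \<inter> K \<subseteq> L"
  proof
    fix y assume y: "y \<in> L' \<inter> K"
    then obtain l r where l: "l \<in> L" and r: "r \<in> carrier R" and y_eq: "y = l \<oplus> r \<otimes> t [^] k"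
      unfolding L'_def set_add_def' cgenideal_def by blast
    have lR: "l \<in> carrier R"
      using ideal.Icarr[OF L l] .
    have "t \<otimes> y \<oplus> \<ominus> (t \<otimes> l) \<in> L"
      using ideal_add_closed[OF L tK ideal_inv_closed[OF L ideal.I_l_closed[OF L l t]]] y by blast
    moreover have "\<And>w. w \<in> carrier R \<Longrightarrow> t \<otimes> (l \<oplus> r \<otimes> w) \<oplus> \<ominus> (t \<otimes> l) = (w \<otimes> t) \<otimes> r"
      using t r lR by algebra
    ultimately have "t [^] Suc k \<otimes> r \<in> L"
      using tk y_eq by simp
    then have "r \<otimes> t [^] k \<in> L"
      using stable[OF r] r tk by (simp add: m_comm)
    then show "y \<in> L"
      unfolding y_eq by (rule ideal_add_closed[OF L l])
  qed
  then have "L' = L"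
    by (rule max[OF L' LL'])
  then show ?thesis
    using tkL' by blast
qed

lemma ideal_power_subset_of_maximal:
  assumes I: "ideal I R" and L: "ideal L R" and K: "ideal K R" and KI: "K \<cdot> I \<subseteq> L"
    and max: "\<And>L'. ideal L' R \<Longrightarrow> L \<subseteq> L' \<Longrightarrow> L' \<inter> K \<subseteq> L \<Longrightarrow> L' = L"
  shows "\<exists>m. ideal_power R I m \<subseteq> L"
proof -
  obtain T where T: "T \<subseteq> carrier R" "finite T" "I = Idl T"
    using finetely_gen[OF I] by blast
  have "\<exists>k::nat. t [^] k \<in> L" if tT: "t \<in> T" for t
  proof (rule power_mem_of_maximal[OF L K _ _ max])
    have tI: "t \<in> I"
      using genideal_self[OF T(1)] tT T(3) by blast
    then show tR: "t \<in> carrier R"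
      using ideal.Icarr[OF I] by blast
    show "t \<otimes> y \<in> L" if y: "y \<in> K" for y
    proof -
      have "y \<otimes> t \<in> K \<cdot> I"
        by (rule ideal_prod.prod[OF y tI])
      then show ?thesis
        using KI tR ideal.Icarr[OF K y] by (simp add: m_comm subset_iff)
    qed
  qed
  then show ?thesis
    using ideal_power_genideal_subset[OF L T(2) T(1)] T(3) by auto
qed

lemma Inter_ideal_power_subset_prod:
  assumes I: "ideal I R"
  shows "(\<Inter>n. ideal_power R I n) \<subseteq> (\<Inter>n. ideal_power R I n) \<cdot> I"
proof -
  define K where "K = (\<Inter>n. ideal_power R I n)"
  define N where "N = K \<cdot> I"
  have K: "ideal K R"
    unfolding K_def by (rule i_Intersect) (use ideal_power_ideal[OF I] in auto)
  have N: "ideal N R" and NK: "N \<subseteq> K"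
    unfolding N_def using ideal_prod_is_ideal[OF K I] ideal_prod_inter[OF K I] by auto
  let ?F = "{L. ideal L R \<and> N \<subseteq> L \<and> L \<inter> K = N}"
  have "N \<in> ?F"
    using N NK by blast
  then have "?F \<noteq> {}" and "?F \<subseteq> {J. ideal J R}"
    by blast+
  from ideal_family_has_maximal[OF this] obtain L
    where L_in: "L \<in> ?F" and Lmax: "\<forall>L'\<in>?F. L \<subseteq> L' \<longrightarrow> L' = L" ..
  have L: "ideal L R" "N \<subseteq> L" "L \<inter> K = N"
    using L_in by blast+
  have "L' = L" if L': "ideal L' R" "L \<subseteq> L'" "L' \<inter> K \<subseteq> L" for L'
  proof -
    have NL': "N \<subseteq> L'"
      using L(2) L'(2) by (rule subset_trans)
    have "L' \<inter> K = N"
    proof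
      show "L' \<inter> K \<subseteq> N"
        using L'(3) L(3) by blast
      show "N \<subseteq> L' \<inter> K"
        using NL' NK by (rule Int_greatest)
    qed
    then have "L' \<in> ?F"
      using L'(1) NL' by simp
    then show ?thesis
      using Lmax L'(2) by simp
  qed
  then obtain m where "ideal_power R I m \<subseteq> L"
    using ideal_power_subset_of_maximal[OF I L(1) K] L(2) unfolding N_def by blast
  then have "K \<subseteq> N"
    using L(3) unfolding K_def by blast
  then show ?thesis
    unfolding N_def K_def .
qed

end

section \<open>Adic Cauchy sequences\<close>

locale adic_ring = cring R for R (structure) +
  fixes I :: "'a set"
  assumes I_ideal: "ideal I R"
begin

abbreviation Ipow :: "nat \<Rightarrow> 'a set" where
  "Ipow n \<equiv> ideal_power R I n"

lemma Ipow_ideal: "ideal (Ipow n) R"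
  by (rule ideal_power_ideal[OF I_ideal])

definition adic_cauchy :: "(nat \<Rightarrow> 'a) \<Rightarrow> bool" where
  "adic_cauchy s \<longleftrightarrow> (\<forall>n. cong_mod (Ipow n) (s (Suc n)) (s n))"

definition adic_equiv :: "(nat \<Rightarrow> 'a) \<Rightarrow> (nat \<Rightarrow> 'a) \<Rightarrow> bool" where
  "adic_equiv s t \<longleftrightarrow> (\<forall>n. cong_mod (Ipow n) (s n) (t n))"

lemma adic_cauchy_carrier: "adic_cauchy s \<Longrightarrow> s n \<in> carrier R"
  unfolding adic_cauchy_def cong_mod_def by blast

lemma adic_equiv_carrier: "adic_equiv s t \<Longrightarrow> s n \<in> carrier R \<and> t n \<in> carrier R"
  unfolding adic_equiv_def cong_mod_def by blast

lemma adic_equiv_refl: "(\<And>n. s n \<in> carrier R) \<Longrightarrow> adic_equiv s s"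
  unfolding adic_equiv_def using cong_mod_refl[OF Ipow_ideal] by blast

lemma adic_equiv_trans:
  assumes "adic_equiv s t" "adic_equiv t u"
  shows "adic_equiv s u"
  unfolding adic_equiv_def
proof
  fix n
  show "cong_mod (Ipow n) (s n) (u n)"
    by (rule cong_mod_trans[OF Ipow_ideal]) (use assms in \<open>auto simp: adic_equiv_def\<close>)
qed

definition completion_of_seq :: "(nat \<Rightarrow> 'a) \<Rightarrow> nat \<Rightarrow> 'a set" where
  "completion_of_seq s = (\<lambda>n. Ipow n +> s n)"

lemma completion_map_eq: "completion_map R I r = completion_of_seq (\<lambda>n. r)"
  by (simp add: completion_map_def completion_of_seq_def)

lemma completion_of_seq_mem:
  assumes s: "adic_cauchy s"
  shows "completion_of_seq s \<in> adic_completion R I"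
proof -
  have "Ipow (Suc n) +> s (Suc n) \<subseteq> Ipow n +> s n" for n
  proof -
    have "Ipow (Suc n) +> s (Suc n) \<subseteq> Ipow n +> s (Suc n)"
      using ideal_power_Suc_subset[OF I_ideal] unfolding a_r_coset_def' by blast
    also have "\<dots> = Ipow n +> s n"
      using s cong_mod_iff_rcos_eq[OF Ipow_ideal] adic_cauchy_carrier unfolding adic_cauchy_def by blast
    finally show ?thesis .
  qed
  moreover have "Ipow n +> s n \<in> a_rcosets (Ipow n)" for n
    using adic_cauchy_carrier[OF s] unfolding A_RCOSETS_def' by blast
  ultimately show ?thesis
    unfolding adic_completion_def completion_of_seq_def by blast
qed

lemma completion_of_seq_eq_iff:
  assumes "\<And>n. s n \<in> carrier R" "\<And>n. t n \<in> carrier R"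
  shows "completion_of_seq s = completion_of_seq t \<longleftrightarrow> adic_equiv s t"
  unfolding completion_of_seq_def adic_equiv_def fun_eq_iff
  using cong_mod_iff_rcos_eq[OF Ipow_ideal] assms by blast

lemma adic_completion_rep:
  assumes x: "x \<in> adic_completion R I"
  shows "adic_cauchy (\<lambda>n. coset_rep (x n))" and "completion_of_seq (\<lambda>n. coset_rep (x n)) = x"
proof -
  have rep: "coset_rep (x n) \<in> x n \<and> coset_rep (x n) \<in> carrier R \<and> x n = Ipow n +> coset_rep (x n)" for n
    using coset_rep_rcos[OF Ipow_ideal] x unfolding adic_completion_def by blast
  then show "completion_of_seq (\<lambda>n. coset_rep (x n)) = x"
    unfolding completion_of_seq_def by auto
  have "coset_rep (x (Suc n)) \<in> Ipow n +> coset_rep (x n)" for n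
    using rep[of "Suc n"] rep[of n] x unfolding adic_completion_def by blast
  then show "adic_cauchy (\<lambda>n. coset_rep (x n))"
    unfolding adic_cauchy_def using cong_mod_if_in_rcos[OF Ipow_ideal] rep by blast
qed

lemma adic_equiv_add:
  "adic_equiv s t \<Longrightarrow> adic_equiv s' t' \<Longrightarrow> adic_equiv (\<lambda>n. s n \<oplus> s' n) (\<lambda>n. t n \<oplus> t' n)"
  unfolding adic_equiv_def using cong_mod_add[OF Ipow_ideal] by blast

lemma adic_equiv_smult:
  "a \<in> carrier R \<Longrightarrow> adic_equiv s t \<Longrightarrow> adic_equiv (\<lambda>n. a \<otimes> s n) (\<lambda>n. a \<otimes> t n)"
  unfolding adic_equiv_def using cong_mod_mult[OF Ipow_ideal cong_mod_refl[OF Ipow_ideal]] by blast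

lemma adic_cauchy_partial_sums:
  assumes b: "\<And>n. b (Suc n) \<in> Ipow n" and b0: "b 0 \<in> carrier R"
  shows "adic_cauchy (\<lambda>n. \<Oplus>k\<in>{..n}. b k)"
  unfolding adic_cauchy_def
proof
  fix n
  have bR: "b k \<in> carrier R" for k
    using b b0 ideal_subset_carrier[OF Ipow_ideal] by (cases k) auto
  have sR: "(\<Oplus>k\<in>A. b k) \<in> carrier R" for A
    by (rule finsum_closed) (use bR in blast)
  have "(\<Oplus>k\<in>{..Suc n}. b k) = b (Suc n) \<oplus> (\<Oplus>k\<in>{..n}. b k)"
    by (rule finsum_Suc) (use bR in blast)
  moreover have "\<And>x y. x \<in> carrier R \<Longrightarrow> y \<in> carrier R \<Longrightarrow> (x \<oplus> y) \<ominus> y = x"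
    by algebra
  ultimately have "(\<Oplus>k\<in>{..Suc n}. b k) \<ominus> (\<Oplus>k\<in>{..n}. b k) = b (Suc n)"
    using bR sR by simp
  then show "cong_mod (Ipow n) (\<Oplus>k\<in>{..Suc n}. b k) (\<Oplus>k\<in>{..n}. b k)"
    unfolding cong_mod_def using b sR by simp
qed

text \<open>The first term \<open>z 1\<close> is only known to lie in \<open>I = I^1\<close>, whence the index \<open>Suc (k - 1)\<close>.\<close>

lemma adic_cauchy_telescope:
  assumes z: "adic_cauchy z" "z 1 \<in> I"
  obtains u where "\<And>k. u k \<in> Ipow (Suc (k - 1))" and "\<And>n. (\<Oplus>k\<in>{..n}. u k) = z (Suc n)"
proof
  define u where "u k = (if k = 0 then z 1 else z (Suc k) \<ominus> z k)" for k
  have zR: "z n \<in> carrier R" for n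
    using adic_cauchy_carrier[OF z(1)] .
  show u: "u k \<in> Ipow (Suc (k - 1))" for k
  proof (cases k)
    case 0
    then show ?thesis
      unfolding u_def using z(2) ideal_prod_one[OF I_ideal] by simp
  next
    case (Suc j)
    have "cong_mod (Ipow k) (z (Suc k)) (z k)"
      using z(1) unfolding adic_cauchy_def by blast
    then show ?thesis
      unfolding u_def cong_mod_def using Suc by simp
  qed
  have uR: "u k \<in> carrier R" for k
    using u ideal_subset_carrier[OF Ipow_ideal] by blast
  show "(\<Oplus>k\<in>{..n}. u k) = z (Suc n)" for n
  proof (induct n)
    case 0
    have "(\<Oplus>k\<in>{..0}. u k) = u 0"
      by (rule finsum_0) (use uR in blast)
    then show ?case
      by (simp add: u_def)
  next
    case (Suc n)
    have "\<And>x y. x \<in> carrier R \<Longrightarrow> y \<in> carrier R \<Longrightarrow> (x \<ominus> y) \<oplus> y = x"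
      by algebra
    then show ?case
      using Suc uR zR by (simp add: finsum_Suc u_def)
  qed
qed

lemma adic_cauchy_decompose:
  assumes T: "finite T" "T \<subseteq> carrier R" "I = Idl T" and z: "adic_cauchy z" "z 1 \<in> I"
  shows "\<exists>Y. (\<forall>t\<in>T. adic_cauchy (Y t)) \<and> adic_equiv z (\<lambda>n. lincomb T (\<lambda>t. Y t n) (\<lambda>t. t))"
proof -
  obtain u where u: "\<And>k. u k \<in> Ipow (Suc (k - 1))" and u_sum: "\<And>n. (\<Oplus>k\<in>{..n}. u k) = z (Suc n)"
    using adic_cauchy_telescope[OF z] by blast
  have "Ipow (Suc j) \<subseteq> lincombs T (Ipow j)" for j
    using genideal_prod_subset_lincombs[OF T(1,2) Ipow_ideal] T(3) by simp
  then have "\<forall>k. \<exists>b. b \<in> T \<rightarrow> Ipow (k - 1) \<and> u k = lincomb T b (\<lambda>t. t)"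
    using u unfolding lincombs_def by blast
  then obtain B where B: "\<And>k. B k \<in> T \<rightarrow> Ipow (k - 1)" "\<And>k. u k = lincomb T (B k) (\<lambda>t. t)"
    by metis
  have BR: "B k \<in> T \<rightarrow> carrier R" for k
    using B(1) ideal_subset_carrier[OF Ipow_ideal] by blast
  define Y where "Y t n = (\<Oplus>k\<in>{..n}. B k t)" for t n
  have Y_cauchy: "adic_cauchy (Y t)" if t: "t \<in> T" for t
  proof -
    have "B (Suc n) t \<in> Ipow n" for n
      using B(1)[of "Suc n"] t by auto
    then show ?thesis
      unfolding Y_def by (rule adic_cauchy_partial_sums) (use BR t in blast)
  qed
  have idT: "(\<lambda>t. t) \<in> T \<rightarrow> carrier R"
    using T(2) by blast
  have "lincomb T (\<lambda>t. Y t n) (\<lambda>t. t) = z (Suc n)" for n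
    unfolding Y_def using lincomb_partial_sums[where B = B, OF BR idT] B(2) u_sum by simp
  then have "adic_equiv z (\<lambda>n. lincomb T (\<lambda>t. Y t n) (\<lambda>t. t))"
    using z(1) cong_mod_sym[OF Ipow_ideal] unfolding adic_equiv_def adic_cauchy_def by simp
  then show ?thesis
    using Y_cauchy by blast
qed

text \<open>
  \<open>adic_span G c J\<close> consists of the sequences equivalent to \<open>r + \<Sum>e\<in>G. f e c\<^sub>e\<close> with \<open>r \<in> R\<close>
  and \<open>f e \<in> J\<close>: for \<open>J = R\<close> this is the submodule of \<open>R^\<close> generated by the image of \<open>R\<close> and the
  \<open>c\<^sub>e\<close>.
\<close>
definition adic_span :: "'c set \<Rightarrow> ('c \<Rightarrow> nat \<Rightarrow> 'a) \<Rightarrow> 'a set \<Rightarrow> (nat \<Rightarrow> 'a) set" where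
  "adic_span G c J =
     {s. \<exists>r\<in>carrier R. \<exists>f\<in>G \<rightarrow> J. adic_equiv s (\<lambda>n. r \<oplus> lincomb G f (\<lambda>e. c e n))}"

lemma adic_span_carrier: "s \<in> adic_span G c J \<Longrightarrow> s n \<in> carrier R"
  unfolding adic_span_def using adic_equiv_carrier by blast

lemma adic_span_equiv: "adic_equiv s t \<Longrightarrow> t \<in> adic_span G c J \<Longrightarrow> s \<in> adic_span G c J"
  unfolding adic_span_def using adic_equiv_trans by blast

lemma adic_span_const:
  assumes J: "ideal J R" and c: "c \<in> G \<rightarrow> UNIV \<rightarrow> carrier R" and r: "r \<in> carrier R"
  shows "(\<lambda>n. r) \<in> adic_span G c J"
proof -
  have "(\<lambda>e. \<zero>) \<in> G \<rightarrow> J"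
    using ideal_zero_closed[OF J] by blast
  moreover have "lincomb G (\<lambda>e. \<zero>) (\<lambda>e. c e n) = \<zero>" for n
    using c by (intro lincomb_zero) (simp add: Pi_iff)
  then have "adic_equiv (\<lambda>n. r) (\<lambda>n. r \<oplus> lincomb G (\<lambda>e. \<zero>) (\<lambda>e. c e n))"
    using adic_equiv_refl r by simp
  ultimately show ?thesis
    unfolding adic_span_def using r by blast
qed

lemma adic_span_add:
  assumes J: "ideal J R" and c: "c \<in> G \<rightarrow> UNIV \<rightarrow> carrier R"
    and s: "s \<in> adic_span G c J" and s': "s' \<in> adic_span G c J"
  shows "(\<lambda>n. s n \<oplus> s' n) \<in> adic_span G c J"
proof -
  obtain r f where r: "r \<in> carrier R" "f \<in> G \<rightarrow> J"
    and s_eq: "adic_equiv s (\<lambda>n. r \<oplus> lincomb G f (\<lambda>e. c e n))"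
    using s unfolding adic_span_def by blast
  obtain r' f' where r': "r' \<in> carrier R" "f' \<in> G \<rightarrow> J"
    and s'_eq: "adic_equiv s' (\<lambda>n. r' \<oplus> lincomb G f' (\<lambda>e. c e n))"
    using s' unfolding adic_span_def by blast
  have fR: "f \<in> G \<rightarrow> carrier R" "f' \<in> G \<rightarrow> carrier R"
    using r(2) r'(2) ideal_subset_carrier[OF J] by blast+
  have cR: "(\<lambda>e. c e n) \<in> G \<rightarrow> carrier R" for n
    using c by (simp add: Pi_iff)
  have "(r \<oplus> lincomb G f (\<lambda>e. c e n)) \<oplus> (r' \<oplus> lincomb G f' (\<lambda>e. c e n))
      = (r \<oplus> r') \<oplus> lincomb G (\<lambda>e. f e \<oplus> f' e) (\<lambda>e. c e n)" for n
  proof -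
    have "\<And>x y. x \<in> carrier R \<Longrightarrow> y \<in> carrier R \<Longrightarrow> (r \<oplus> x) \<oplus> (r' \<oplus> y) = (r \<oplus> r') \<oplus> (x \<oplus> y)"
      using r(1) r'(1) by algebra
    then show ?thesis
      using lincomb_add[OF fR cR] lincomb_closed[OF fR(1) cR] lincomb_closed[OF fR(2) cR] by simp
  qed
  then have "adic_equiv (\<lambda>n. s n \<oplus> s' n) (\<lambda>n. (r \<oplus> r') \<oplus> lincomb G (\<lambda>e. f e \<oplus> f' e) (\<lambda>e. c e n))"
    using adic_equiv_add[OF s_eq s'_eq] by simp
  moreover have "(\<lambda>e. f e \<oplus> f' e) \<in> G \<rightarrow> J"
    using r(2) r'(2) ideal_add_closed[OF J] by (simp add: Pi_iff)
  ultimately show ?thesis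
    unfolding adic_span_def using r(1) r'(1) by blast
qed

lemma adic_span_smult:
  assumes G: "finite G" and J: "ideal J R" and c: "c \<in> G \<rightarrow> UNIV \<rightarrow> carrier R"
    and s: "s \<in> adic_span G c (carrier R)" and a: "a \<in> J"
  shows "(\<lambda>n. a \<otimes> s n) \<in> adic_span G c J"
proof -
  obtain r f where r: "r \<in> carrier R" "f \<in> G \<rightarrow> carrier R"
    and s_eq: "adic_equiv s (\<lambda>n. r \<oplus> lincomb G f (\<lambda>e. c e n))"
    using s unfolding adic_span_def by blast
  have aR: "a \<in> carrier R"
    using ideal.Icarr[OF J a] .
  have cR: "(\<lambda>e. c e n) \<in> G \<rightarrow> carrier R" for n
    using c by (simp add: Pi_iff)
  have "a \<otimes> (r \<oplus> lincomb G f (\<lambda>e. c e n)) = a \<otimes> r \<oplus> lincomb G (\<lambda>e. a \<otimes> f e) (\<lambda>e. c e n)" for n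
    using r_distr[OF r(1) lincomb_closed[OF r(2) cR] aR] lincomb_smult[OF G aR r(2) cR] by simp
  then have "adic_equiv (\<lambda>n. a \<otimes> s n) (\<lambda>n. a \<otimes> r \<oplus> lincomb G (\<lambda>e. a \<otimes> f e) (\<lambda>e. c e n))"
    using adic_equiv_smult[OF aR s_eq] by simp
  moreover have "(\<lambda>e. a \<otimes> f e) \<in> G \<rightarrow> J"
    using r(2) ideal.I_r_closed[OF J a] by (simp add: Pi_iff)
  ultimately show ?thesis
    unfolding adic_span_def using aR r(1) by blast
qed

lemma adic_span_finsum:
  assumes J: "ideal J R" and c: "c \<in> G \<rightarrow> UNIV \<rightarrow> carrier R"
  shows "finite T \<Longrightarrow> (\<And>t. t \<in> T \<Longrightarrow> Y t \<in> adic_span G c J) \<Longrightarrow>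
    (\<lambda>n. \<Oplus>t\<in>T. Y t n) \<in> adic_span G c J"
proof (induct T rule: finite_induct)
  case empty
  then show ?case
    using adic_span_const[OF J c zero_closed] by simp
next
  case (insert t T)
  have "(\<lambda>n. Y t n \<oplus> (\<Oplus>t\<in>T. Y t n)) \<in> adic_span G c J"
    using adic_span_add[OF J c] insert by simp
  moreover have "(\<lambda>t. Y t n) \<in> insert t T \<rightarrow> carrier R" for n
    using adic_span_carrier insert(4) by blast
  ultimately show ?case
    using insert(1,2) by (simp add: finsum_insert)
qed

lemma adic_span_insert:
  assumes G: "finite G" "d \<notin> G" and c: "c \<in> insert d G \<rightarrow> UNIV \<rightarrow> carrier R"
    and d: "c d \<in> adic_span G c (carrier R)"
  shows "adic_span (insert d G) c (carrier R) \<subseteq> adic_span G c (carrier R)"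
proof
  fix s assume "s \<in> adic_span (insert d G) c (carrier R)"
  then obtain r f where r: "r \<in> carrier R" "f \<in> insert d G \<rightarrow> carrier R"
    and s_eq: "adic_equiv s (\<lambda>n. r \<oplus> lincomb (insert d G) f (\<lambda>e. c e n))"
    unfolding adic_span_def by blast
  have cG: "c \<in> G \<rightarrow> UNIV \<rightarrow> carrier R"
    using c by (simp add: Pi_iff)
  have cR: "(\<lambda>e. c e n) \<in> insert d G \<rightarrow> carrier R" for n
    using c by (simp add: Pi_iff)
  have fG: "f \<in> G \<rightarrow> carrier R"
    using r(2) by blast
  have lR: "lincomb G f (\<lambda>e. c e n) \<in> carrier R" for n
    using cR by (intro lincomb_closed[OF fG]) blast
  have "(\<lambda>n. f d \<otimes> c d n) \<in> adic_span G c (carrier R)"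
    using adic_span_smult[OF G(1) oneideal cG d] r(2) by blast
  moreover have "(\<lambda>n. r \<oplus> lincomb G f (\<lambda>e. c e n)) \<in> adic_span G c (carrier R)"
  proof -
    have "adic_equiv (\<lambda>n. r \<oplus> lincomb G f (\<lambda>e. c e n)) (\<lambda>n. r \<oplus> lincomb G f (\<lambda>e. c e n))"
      using r(1) lR by (intro adic_equiv_refl) simp
    then show ?thesis
      unfolding adic_span_def using r(1) fG by blast
  qed
  ultimately have "(\<lambda>n. f d \<otimes> c d n \<oplus> (r \<oplus> lincomb G f (\<lambda>e. c e n))) \<in> adic_span G c (carrier R)"
    by (rule adic_span_add[OF oneideal cG])
  moreover have "f d \<otimes> c d n \<oplus> (r \<oplus> lincomb G f (\<lambda>e. c e n)) = r \<oplus> lincomb (insert d G) f (\<lambda>e. c e n)" for n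
  proof -
    have "f d \<otimes> c d n \<in> carrier R"
      using r(2) cR[of n] by auto
    then show ?thesis
      using lincomb_insert[OF G r(2) cR] a_lcomm[OF _ r(1) lR] by simp
  qed
  ultimately show "s \<in> adic_span G c (carrier R)"
    using adic_span_equiv[OF s_eq] by simp
qed

lemma completion_map_mem: "r \<in> carrier R \<Longrightarrow> completion_map R I r \<in> adic_completion R I"
  unfolding completion_map_eq
  by (intro completion_of_seq_mem) (simp add: adic_cauchy_def cong_mod_refl[OF Ipow_ideal])

lemma completion_fin_gen_if_complete:
  assumes "adically_complete R I"
  shows "completion_fin_gen R I"
proof -
  let ?e = "completion_map R I \<one>"
  have rep: "cong_mod (Ipow n) (coset_rep (?e n)) \<one>" for n
  proof -
    have "?e n \<in> a_rcosets (Ipow n)"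
      unfolding completion_map_def A_RCOSETS_def' by blast
    then have "coset_rep (?e n) \<in> Ipow n +> \<one>"
      using coset_rep_rcos[OF Ipow_ideal] unfolding completion_map_def by blast
    then show ?thesis
      by (rule cong_mod_if_in_rcos[OF Ipow_ideal one_closed])
  qed
  have "\<exists>f. f \<in> {?e} \<rightarrow> carrier R \<and> (\<forall>n. x n = Ipow n +> (\<Oplus>e\<in>{?e}. f e \<otimes> coset_rep (e n)))"
    if x: "x \<in> adic_completion R I" for x
  proof -
    obtain r where r: "r \<in> carrier R" "x = completion_map R I r"
      using assms x unfolding adically_complete_def bij_betw_def by blast
    have "x n = Ipow n +> (\<Oplus>e\<in>{?e}. r \<otimes> coset_rep (e n))" for n
    proof -
      have repR: "coset_rep (?e n) \<in> carrier R"
        using cong_mod_carrier[OF rep] by blast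
      have "cong_mod (Ipow n) (r \<otimes> coset_rep (?e n)) (r \<otimes> \<one>)"
        by (rule cong_mod_mult[OF Ipow_ideal cong_mod_refl[OF Ipow_ideal r(1)] rep])
      then have "Ipow n +> r = Ipow n +> (r \<otimes> coset_rep (?e n))"
        using cong_mod_iff_rcos_eq[OF Ipow_ideal] r(1) repR by simp
      then show ?thesis
        using r repR unfolding completion_map_def by simp
    qed
    moreover have "(\<lambda>e. r) \<in> {?e} \<rightarrow> carrier R"
      using r(1) by blast
    ultimately show ?thesis
      by (intro exI[of _ "\<lambda>e. r"]) blast
  qed
  then show ?thesis
    unfolding completion_fin_gen_def using completion_map_mem[OF one_closed]
    by (intro exI[of _ "{?e}"]) blast
qed

lemma completion_fin_gen_cauchy_span:
  assumes "completion_fin_gen R I"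
  obtains E and c :: "(nat \<Rightarrow> 'a set) \<Rightarrow> nat \<Rightarrow> 'a"
  where "finite E" and "\<And>e. e \<in> E \<Longrightarrow> adic_cauchy (c e)"
    and "{s. adic_cauchy s} \<subseteq> adic_span E c (carrier R)"
proof -
  obtain E where E: "finite E" "E \<subseteq> adic_completion R I"
    and gen: "\<forall>y\<in>adic_completion R I. \<exists>f. f \<in> E \<rightarrow> carrier R \<and>
      (\<forall>n. y n = Ipow n +> (\<Oplus>e\<in>E. f e \<otimes> coset_rep (e n)))"
    using assms unfolding completion_fin_gen_def by blast
  define c where "c e n = coset_rep (e n)" for e :: "nat \<Rightarrow> 'a set" and n
  have c_cauchy: "adic_cauchy (c e)" if "e \<in> E" for e
    unfolding c_def using adic_completion_rep(1) E(2) that by blast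
  have span: "{s. adic_cauchy s} \<subseteq> adic_span E c (carrier R)"
  proof
    fix s assume "s \<in> {s. adic_cauchy s}"
    then have s: "adic_cauchy s" by simp
    from gen completion_of_seq_mem[OF s] obtain f where f: "f \<in> E \<rightarrow> carrier R"
      and fs0: "\<forall>n. completion_of_seq s n = Ipow n +> (\<Oplus>e\<in>E. f e \<otimes> coset_rep (e n))"
      by blast
    from fs0 have fs: "\<forall>n. completion_of_seq s n = Ipow n +> lincomb E f (\<lambda>e. c e n)"
      unfolding lincomb_def c_def .
    have lR: "lincomb E f (\<lambda>e. c e n) \<in> carrier R" for n
      using c_cauchy adic_cauchy_carrier by (intro lincomb_closed[OF f]) blast
    have "completion_of_seq s = completion_of_seq (\<lambda>n. \<zero> \<oplus> lincomb E f (\<lambda>e. c e n))"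
      using fs lR unfolding completion_of_seq_def fun_eq_iff by simp
    moreover have "completion_of_seq s = completion_of_seq (\<lambda>n. \<zero> \<oplus> lincomb E f (\<lambda>e. c e n))
        \<longleftrightarrow> adic_equiv s (\<lambda>n. \<zero> \<oplus> lincomb E f (\<lambda>e. c e n))"
      by (rule completion_of_seq_eq_iff) (use adic_cauchy_carrier[OF s] lR in simp_all)
    ultimately have "adic_equiv s (\<lambda>n. \<zero> \<oplus> lincomb E f (\<lambda>e. c e n))"
      by simp
    then show "s \<in> adic_span E c (carrier R)"
      unfolding adic_span_def using f by blast
  qed
  show ?thesis
    by (rule that[of E c, OF E(1) c_cauchy span])
qed

end

section \<open>The completion map\<close>

locale noetherian_adic_ring = adic_ring R I + noetherian_cring R for R (structure) and I
begin

lemma cauchy_mem_adic_span_ideal: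
  assumes G: "finite G" and c: "c \<in> G \<rightarrow> UNIV \<rightarrow> carrier R"
    and gen: "{s. adic_cauchy s} \<subseteq> adic_span G c (carrier R)"
    and z: "adic_cauchy z" "z 1 \<in> I"
  shows "z \<in> adic_span G c I"
proof -
  obtain T where T: "T \<subseteq> carrier R" "finite T" "I = Idl T"
    using finetely_gen[OF I_ideal] by blast
  obtain Y where Y: "\<And>t. t \<in> T \<Longrightarrow> adic_cauchy (Y t)"
    and z_eq: "adic_equiv z (\<lambda>n. lincomb T (\<lambda>t. Y t n) (\<lambda>t. t))"
    using adic_cauchy_decompose[OF T(2,1,3) z] by blast
  have "(\<lambda>n. t \<otimes> Y t n) \<in> adic_span G c I" if t: "t \<in> T" for t
  proof -
    have "Y t \<in> adic_span G c (carrier R)"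
      using gen Y[OF t] by blast
    moreover have "t \<in> I"
      using genideal_self[OF T(1)] T(3) t by blast
    ultimately show ?thesis
      by (rule adic_span_smult[OF G I_ideal c])
  qed
  then have "(\<lambda>n. \<Oplus>t\<in>T. t \<otimes> Y t n) \<in> adic_span G c I"
    by (rule adic_span_finsum[OF I_ideal c T(2)])
  moreover have "lincomb T (\<lambda>t. Y t n) (\<lambda>t. t) = (\<Oplus>t\<in>T. t \<otimes> Y t n)" for n
  proof -
    have "Y t n \<in> carrier R" if "t \<in> T" for t
      using adic_cauchy_carrier[OF Y[OF that]] .
    then show ?thesis
      unfolding lincomb_def using T(1) by (intro finsum_cong') (auto simp: m_comm)
  qed
  ultimately show ?thesis
    using adic_span_equiv[OF z_eq] by simp
qed

text \<open>This is \<open>R^ = R + I R^\<close>.\<close>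

lemma cauchy_subset_adic_span_ideal:
  assumes G: "finite G" and c: "c \<in> G \<rightarrow> UNIV \<rightarrow> carrier R"
    and gen: "{s. adic_cauchy s} \<subseteq> adic_span G c (carrier R)"
  shows "{s. adic_cauchy s} \<subseteq> adic_span G c I"
proof
  fix s assume "s \<in> {s. adic_cauchy s}"
  then have s: "adic_cauchy s" by simp
  have sR: "s n \<in> carrier R" for n
    using adic_cauchy_carrier[OF s] .
  define z where "z n = s n \<oplus> \<ominus> s 1" for n
  have "adic_cauchy z"
    unfolding adic_cauchy_def
  proof
    fix n
    have "cong_mod (Ipow n) (s (Suc n)) (s n)"
      using s unfolding adic_cauchy_def by blast
    from cong_mod_add[OF Ipow_ideal this cong_mod_refl[OF Ipow_ideal, of "\<ominus> s 1"]]
    show "cong_mod (Ipow n) (z (Suc n)) (z n)"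
      unfolding z_def using sR by simp
  qed
  moreover have "z 1 \<in> I"
    unfolding z_def using sR ideal_zero_closed[OF I_ideal] by (simp add: r_neg)
  ultimately have "z \<in> adic_span G c I"
    by (rule cauchy_mem_adic_span_ideal[OF G c gen])
  then have "(\<lambda>n. z n \<oplus> s 1) \<in> adic_span G c I"
    by (rule adic_span_add[OF I_ideal c _ adic_span_const[OF I_ideal c sR]])
  moreover have "\<And>x y. x \<in> carrier R \<Longrightarrow> y \<in> carrier R \<Longrightarrow> (x \<oplus> \<ominus> y) \<oplus> y = x"
    by algebra
  then have "(\<lambda>n. z n \<oplus> s 1) = s"
    unfolding z_def using sR by simp
  ultimately show "s \<in> adic_span G c I"
    by simp
qed

end

locale jacobson_adic_ring = noetherian_adic_ring +
  assumes I_jacobson: "I \<subseteq> jacobson_radical R"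
begin

lemma one_minus_Units: "g \<in> I \<Longrightarrow> \<one> \<ominus> g \<in> Units R"
  using jacobson_radical_one_minus_Units I_jacobson by blast

lemma krull_intersection: "(\<Inter>n. Ipow n) = {\<zero>}"
proof -
  define K where "K = (\<Inter>n. Ipow n)"
  have K: "ideal K R"
    unfolding K_def by (rule i_Intersect) (use Ipow_ideal in auto)
  obtain S where S: "S \<subseteq> carrier R" "finite S" "K = Idl S"
    using finetely_gen[OF K] by blast
  have "K \<subseteq> K \<cdot> I"
    unfolding K_def by (rule Inter_ideal_power_subset_prod[OF I_ideal])
  also have "\<dots> \<subseteq> lincombs S I"
    using genideal_prod_subset_lincombs[OF S(2,1) I_ideal] S(3) by simp
  finally have "K \<subseteq> {\<zero>}"
    using nakayama_lincombs[OF I_ideal one_minus_Units S(2)] genideal_self[OF S(1)] S(3)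
      ideal_subset_carrier[OF K] by simp
  then show ?thesis
    using ideal_zero_closed[OF K] unfolding K_def by blast
qed

lemma completion_map_inj: "inj_on (completion_map R I) (carrier R)"
proof (rule inj_onI)
  fix a b assume a: "a \<in> carrier R" and b: "b \<in> carrier R"
    and "completion_map R I a = completion_map R I b"
  then have "adic_equiv (\<lambda>n. a) (\<lambda>n. b)"
    using completion_of_seq_eq_iff unfolding completion_map_eq by simp
  then have "a \<ominus> b \<in> (\<Inter>n. Ipow n)"
    unfolding adic_equiv_def cong_mod_def by blast
  then show "a = b"
    using krull_intersection r_right_minus_eq[OF a b] by simp
qed

text \<open>Solve \<open>c\<^sub>d = r + g\<^sub>d c\<^sub>d + \<Sum>e\<in>G. g\<^sub>e c\<^sub>e\<close> for \<open>c\<^sub>d\<close>, using that \<open>1 - g\<^sub>d\<close> is a unit.\<close>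

lemma generator_mem_adic_span_remove:
  assumes G: "finite G" "d \<notin> G" and c: "c \<in> insert d G \<rightarrow> UNIV \<rightarrow> carrier R"
    and d: "c d \<in> adic_span (insert d G) c I"
  shows "c d \<in> adic_span G c (carrier R)"
proof -
  obtain r g where r: "r \<in> carrier R" "g \<in> insert d G \<rightarrow> I"
    and d_eq: "adic_equiv (c d) (\<lambda>n. r \<oplus> lincomb (insert d G) g (\<lambda>e. c e n))"
    using d unfolding adic_span_def by blast
  have cR: "(\<lambda>e. c e n) \<in> insert d G \<rightarrow> carrier R" for n
    using c by (simp add: Pi_iff)
  have gR: "g \<in> insert d G \<rightarrow> carrier R"
    using r(2) ideal_subset_carrier[OF I_ideal] by blast
  then have gG: "g \<in> G \<rightarrow> carrier R"
    by blast
  have gd: "g d \<in> I"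
    using r(2) by blast
  define u where "u = inv (\<one> \<ominus> g d)"
  have uR: "u \<in> carrier R"
    unfolding u_def using one_minus_Units[OF gd] by blast
  have "cong_mod (Ipow n) (c d n) (u \<otimes> r \<oplus> lincomb G (\<lambda>e. u \<otimes> g e) (\<lambda>e. c e n))" for n
  proof -
    have lR: "lincomb G g (\<lambda>e. c e n) \<in> carrier R"
      using cR by (intro lincomb_closed[OF gG]) blast
    have "g d \<otimes> c d n \<in> carrier R"
      using gR cR[of n] by auto
    then have "r \<oplus> lincomb (insert d G) g (\<lambda>e. c e n) = g d \<otimes> c d n \<oplus> (r \<oplus> lincomb G g (\<lambda>e. c e n))"
      using lincomb_insert[OF G gR cR] a_lcomm[OF r(1) _ lR] by simp
    moreover have "cong_mod (Ipow n) (c d n) (r \<oplus> lincomb (insert d G) g (\<lambda>e. c e n))"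
      using d_eq unfolding adic_equiv_def by blast
    ultimately have "cong_mod (Ipow n) (c d n) (g d \<otimes> c d n \<oplus> (r \<oplus> lincomb G g (\<lambda>e. c e n)))"
      by simp
    then have "cong_mod (Ipow n) (c d n) (u \<otimes> (r \<oplus> lincomb G g (\<lambda>e. c e n)))"
      unfolding u_def using cong_mod_unit_solve[OF Ipow_ideal one_minus_Units[OF gd]] gR r(1) lR by blast
    moreover have "u \<otimes> (r \<oplus> lincomb G g (\<lambda>e. c e n)) = u \<otimes> r \<oplus> lincomb G (\<lambda>e. u \<otimes> g e) (\<lambda>e. c e n)"
      using r_distr[OF r(1) lR uR] lincomb_smult[OF G(1) uR gG] cR by auto
    ultimately show ?thesis
      by simp
  qed
  then show ?thesis
    unfolding adic_span_def
  proof (intro CollectI bexI)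
    show "u \<otimes> r \<in> carrier R"
      using uR r(1) by simp
    show "(\<lambda>e. u \<otimes> g e) \<in> G \<rightarrow> carrier R"
      using uR gR by (simp add: Pi_iff)
  qed (simp add: adic_equiv_def)
qed

lemma adic_span_remove_generator:
  assumes G: "finite G" "d \<notin> G" and c: "\<And>e. e \<in> insert d G \<Longrightarrow> adic_cauchy (c e)"
    and gen: "{s. adic_cauchy s} \<subseteq> adic_span (insert d G) c (carrier R)"
  shows "{s. adic_cauchy s} \<subseteq> adic_span G c (carrier R)"
proof -
  have cR: "c \<in> insert d G \<rightarrow> UNIV \<rightarrow> carrier R"
    using c adic_cauchy_carrier by blast
  have "c d \<in> adic_span (insert d G) c I"
    using cauchy_subset_adic_span_ideal[OF _ cR gen] G(1) c[of d] by blast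
  then have "c d \<in> adic_span G c (carrier R)"
    by (rule generator_mem_adic_span_remove[OF G cR])
  then show ?thesis
    using adic_span_insert[OF G cR] gen by blast
qed

lemma adic_cauchy_equiv_const:
  assumes "finite G" and "\<And>e. e \<in> G \<Longrightarrow> adic_cauchy (c e)"
    and "{s. adic_cauchy s} \<subseteq> adic_span G c (carrier R)" and s: "adic_cauchy s"
  shows "\<exists>r\<in>carrier R. adic_equiv s (\<lambda>n. r)"
  using assms(1-3)
proof (induct G rule: finite_induct)
  case empty
  then obtain r f where "r \<in> carrier R" "adic_equiv s (\<lambda>n. r \<oplus> lincomb {} f (\<lambda>e. c e n))"
    using s unfolding adic_span_def by blast
  then show ?case
    by auto
next
  case (insert d G)
  have "{s. adic_cauchy s} \<subseteq> adic_span G c (carrier R)"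
    by (rule adic_span_remove_generator[OF insert(1,2,4,5)])
  then show ?case
    using insert(3,4) by blast
qed

lemma completion_map_surj:
  assumes "completion_fin_gen R I"
  shows "adic_completion R I \<subseteq> completion_map R I ` carrier R"
proof
  fix x assume x: "x \<in> adic_completion R I"
  obtain E and c :: "(nat \<Rightarrow> 'a set) \<Rightarrow> nat \<Rightarrow> 'a" where E: "finite E"
    and c: "\<And>e. e \<in> E \<Longrightarrow> adic_cauchy (c e)" and span: "{s. adic_cauchy s} \<subseteq> adic_span E c (carrier R)"
    using completion_fin_gen_cauchy_span[OF assms] by blast
  obtain r where r: "r \<in> carrier R" "adic_equiv (\<lambda>n. coset_rep (x n)) (\<lambda>n. r)"
    using adic_cauchy_equiv_const[OF E c span adic_completion_rep(1)[OF x]] by blast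
  have "completion_of_seq (\<lambda>n. coset_rep (x n)) = completion_of_seq (\<lambda>n. r) \<longleftrightarrow>
      adic_equiv (\<lambda>n. coset_rep (x n)) (\<lambda>n. r)"
    by (rule completion_of_seq_eq_iff) (use adic_cauchy_carrier[OF adic_completion_rep(1)[OF x]] r(1) in simp_all)
  then have "x = completion_map R I r"
    using r(2) adic_completion_rep(2)[OF x] unfolding completion_map_eq by simp
  then show "x \<in> completion_map R I ` carrier R"
    using r(1) by blast
qed

end

theorem theoremB:
  fixes R :: "('a, 'b) ring_scheme" and I :: "'a set"
  assumes "cring R" and "noetherian_ring R"
    and "ideal I R" and "I \<subseteq> jacobson_radical R"
  shows "adically_complete R I \<longleftrightarrow> completion_fin_gen R I"
proof -
  interpret jacobson_adic_ring R I
    using assms by (simp add: jacobson_adic_ring_def jacobson_adic_ring_axioms_def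
      noetherian_adic_ring_def adic_ring_def adic_ring_axioms_def noetherian_cring_def)
  show ?thesis
  proof
    assume "adically_complete R I"
    then show "completion_fin_gen R I"
      by (rule completion_fin_gen_if_complete)
  next
    assume "completion_fin_gen R I"
    then have "completion_map R I ` carrier R = adic_completion R I"
      using completion_map_surj completion_map_mem by (intro equalityI image_subsetI)
    then show "adically_complete R I"
      unfolding adically_complete_def bij_betw_def using completion_map_inj by blast
  qed
qed

end
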